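(* Let $H'$ be the $3$-graph with vertex set $\{1,\dots,6\}$ and edge set $\{123,124,345,346,561,562,135,146,236,245\}$. A blow-up of $H'$ is a $3$-graph obtained by replacing each vertex $i$ of $H'$ by a set $V_i$ (the $V_i$ pairwise disjoint), where a triple of vertices is an edge if and only if its three vertices lie in three distinct sets $V_{i},V_{j},V_{k}$ with $ijk\in E(H')$. Then every blow-up of $H'$ on $n$ vertices has a coclique of size at least $n/2$, and of size strictly greater than $n/2$ if $n\not\equiv 0 \pmod 6$; moreover, when all $V_i$ have equal size $n/6$, the largest coclique has size exactly $n/2$.
   Context: A $3$-graph is a $3$-uniform hypergraph; $ijk$ denotes the triple $\{i,j,k\}$; a coclique is a set of vertices containing no edge. *)

theory Defs
  imports Complex_Main
begin

definition Hp_edges :: "nat set set" where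
  "Hp_edges = {{1,2,3},{1,2,4},{3,4,5},{3,4,6},{5,6,1},{5,6,2},{1,3,5},{1,4,6},{2,3,6},{2,4,5}}"

definition blowup_vertices :: "(nat \<Rightarrow> 'a set) \<Rightarrow> 'a set" where
  "blowup_vertices V = (\<Union>i\<in>{1..6}. V i)"

definition blowup_edges :: "(nat \<Rightarrow> 'a set) \<Rightarrow> 'a set set" where
  "blowup_edges V = {{x, y, z} | x y z i j k.
      x \<in> V i \<and> y \<in> V j \<and> z \<in> V k \<and> {i, j, k} \<in> Hp_edges}"

definition coclique :: "(nat \<Rightarrow> 'a set) \<Rightarrow> 'a set \<Rightarrow> bool" where
  "coclique V S \<longleftrightarrow> S \<subseteq> blowup_vertices V \<and> (\<forall>e\<in>blowup_edges V. \<not> e \<subseteq> S)"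

end

theory Submission
  imports Defs
begin

text \<open>The ten triples avoiding the edges of H' are its complement, and every vertex lies in
  five of them. Weighting vertex i by the size of V i, the independent triples therefore
  have average weight n/2, and blowing up a heaviest one gives a coclique of size at least
  n/2. If all ten triples had weight at most n/2, they would all weigh exactly n/2, which
  forces all parts to have the same size, so n would be divisible by 6.
  Conversely, a coclique only meets the parts indexed by an independent set of H', and H'
  has no independent set of four vertices; with parts of size n/6 this caps every coclique
  at 3 \<cdot> n/6.\<close>

definition Hp_independent :: "nat set \<Rightarrow> bool" where
  "Hp_independent T \<longleftrightarrow> T \<subseteq> {1..6} \<and> (\<forall>e\<in>Hp_edges. \<not> e \<subseteq> T)"

lemma atLeastAtMost_1_6: "{1..6::nat} = {1,2,3,4,5,6}"
  by auto

lemma sum_1_6: "(\<Sum>i\<in>{1..6::nat}. a i) = a 1 + a 2 + a 3 + a 4 + a 5 + a 6"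
  unfolding atLeastAtMost_1_6 by (simp add: add.assoc)

lemma Hp_edge_subset: "e \<in> Hp_edges \<Longrightarrow> e \<subseteq> {1..6}"
  by (auto simp: Hp_edges_def)

lemma Hp_edge_triple: "e \<in> Hp_edges \<Longrightarrow> \<exists>p q r. e = {p,q,r}"
  by (auto simp: Hp_edges_def)

lemma Hp_independent_triples:
  "Hp_independent {1,2,5}" "Hp_independent {1,2,6}" "Hp_independent {1,3,4}"
  "Hp_independent {1,3,6}" "Hp_independent {1,4,5}" "Hp_independent {2,3,4}"
  "Hp_independent {2,3,5}" "Hp_independent {2,4,6}" "Hp_independent {3,5,6}"
  "Hp_independent {4,5,6}"
  by (simp_all add: Hp_independent_def Hp_edges_def)

lemma Hp_independent_card_le_3:
  assumes "Hp_independent T"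
  shows "card T \<le> 3"
proof -
  have T: "T \<subseteq> {1,2,3,4,5,6}" and no_edge: "\<And>e. e \<in> Hp_edges \<Longrightarrow> \<not> e \<subseteq> T"
    using assms by (auto simp: Hp_independent_def atLeastAtMost_1_6)
  have "card T = (\<Sum>i\<in>{1,2,3,4,5,6::nat}. if i \<in> T then 1 else 0)"
    using T by (simp add: sum.If_cases Int_absorb1)
  also have "\<dots> \<le> 3"
    using no_edge[of "{1,2,3}"] no_edge[of "{1,2,4}"] no_edge[of "{3,4,5}"]
      no_edge[of "{3,4,6}"] no_edge[of "{5,6,1}"] no_edge[of "{5,6,2}"]
      no_edge[of "{1,3,5}"] no_edge[of "{1,4,6}"] no_edge[of "{2,3,6}"]
      no_edge[of "{2,4,5}"]
    by (cases "1 \<in> T"; cases "2 \<in> T"; cases "3 \<in> T"; cases "4 \<in> T"; cases "5 \<in> T";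
        cases "6 \<in> T"; simp add: Hp_edges_def)
  finally show ?thesis .
qed

lemma Hp_independent_heavy_triple:
  fixes a :: "nat \<Rightarrow> real"
  shows "\<exists>T. Hp_independent T \<and> (\<Sum>i\<in>{1..6}. a i) / 2 \<le> (\<Sum>i\<in>T. a i)"
proof (rule ccontr)
  assume "\<not> ?thesis"
  then have light: "(\<Sum>i\<in>T. a i) < (\<Sum>i\<in>{1..6}. a i) / 2" if "Hp_independent T" for T
    using that by force
  show False
    using light[OF Hp_independent_triples(1)] light[OF Hp_independent_triples(2)]
      light[OF Hp_independent_triples(3)] light[OF Hp_independent_triples(4)]
      light[OF Hp_independent_triples(5)] light[OF Hp_independent_triples(6)]
      light[OF Hp_independent_triples(7)] light[OF Hp_independent_triples(8)]
      light[OF Hp_independent_triples(9)] light[OF Hp_independent_triples(10)]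
    unfolding sum_1_6 by simp
qed

lemma Hp_independent_heavier_triple:
  fixes a :: "nat \<Rightarrow> real"
  assumes "i \<in> {1..6}" "a i \<noteq> a 1"
  shows "\<exists>T. Hp_independent T \<and> (\<Sum>i\<in>{1..6}. a i) / 2 < (\<Sum>i\<in>T. a i)"
proof (rule ccontr)
  assume "\<not> ?thesis"
  then have light: "(\<Sum>i\<in>T. a i) \<le> (\<Sum>i\<in>{1..6}. a i) / 2" if "Hp_independent T" for T
    using that by force
  show False
    using assms light[OF Hp_independent_triples(1)] light[OF Hp_independent_triples(2)]
      light[OF Hp_independent_triples(3)] light[OF Hp_independent_triples(4)]
      light[OF Hp_independent_triples(5)] light[OF Hp_independent_triples(6)]
      light[OF Hp_independent_triples(7)] light[OF Hp_independent_triples(8)]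
      light[OF Hp_independent_triples(9)] light[OF Hp_independent_triples(10)]
    unfolding sum_1_6 atLeastAtMost_1_6 by auto
qed

locale Hp_blowup =
  fixes V :: "nat \<Rightarrow> 'a set"
  assumes fin: "\<And>i. i \<in> {1..6} \<Longrightarrow> finite (V i)"
    and disj: "\<And>i j. i \<in> {1..6} \<Longrightarrow> j \<in> {1..6} \<Longrightarrow> i \<noteq> j \<Longrightarrow> V i \<inter> V j = {}"
begin

lemma card_UN_parts:
  assumes "T \<subseteq> {1..6}"
  shows "card (\<Union>i\<in>T. V i) = (\<Sum>i\<in>T. card (V i))"
proof (rule card_UN_disjoint)
  show "finite T"
    using finite_subset[OF assms] by simp
  show "\<forall>i\<in>T. finite (V i)" "\<forall>i\<in>T. \<forall>j\<in>T. i \<noteq> j \<longrightarrow> V i \<inter> V j = {}"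
    using assms fin disj by blast+
qed

lemma card_blowup_vertices: "card (blowup_vertices V) = (\<Sum>i\<in>{1..6}. card (V i))"
  unfolding blowup_vertices_def by (rule card_UN_parts) simp

lemma coclique_UN_parts:
  assumes "Hp_independent T"
  shows "coclique V (\<Union>i\<in>T. V i)"
proof -
  have T: "T \<subseteq> {1..6}" and no_edge: "\<And>e. e \<in> Hp_edges \<Longrightarrow> \<not> e \<subseteq> T"
    using assms by (auto simp: Hp_independent_def)
  have part_in_T: "p \<in> T" if "x \<in> V p" "p \<in> {1..6}" "x \<in> (\<Union>i\<in>T. V i)" for x p
    using that T disj by blast
  have "\<not> e \<subseteq> (\<Union>i\<in>T. V i)" if "e \<in> blowup_edges V" for e
  proof
    assume sub: "e \<subseteq> (\<Union>i\<in>T. V i)"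
    obtain x y z p q r where e: "e = {x,y,z}" "x \<in> V p" "y \<in> V q" "z \<in> V r"
      and pqr: "{p,q,r} \<in> Hp_edges"
      using \<open>e \<in> blowup_edges V\<close> unfolding blowup_edges_def by blast
    have "{p,q,r} \<subseteq> {1..6}"
      using Hp_edge_subset[OF pqr] .
    then have "{p,q,r} \<subseteq> T"
      using part_in_T e sub by auto
    then show False
      using no_edge pqr by blast
  qed
  moreover have "(\<Union>i\<in>T. V i) \<subseteq> blowup_vertices V"
    using T unfolding blowup_vertices_def by blast
  ultimately show ?thesis
    unfolding coclique_def by blast
qed

lemma coclique_subset_UN_parts:
  assumes "coclique V S"
  obtains T where "Hp_independent T" "S \<subseteq> (\<Union>i\<in>T. V i)"
proof
  let ?T = "{i\<in>{1..6}. S \<inter> V i \<noteq> {}}"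
  show "S \<subseteq> (\<Union>i\<in>?T. V i)"
    using assms unfolding coclique_def blowup_vertices_def by blast
  have "\<not> e \<subseteq> ?T" if "e \<in> Hp_edges" for e
  proof
    assume "e \<subseteq> ?T"
    obtain p q r where e: "e = {p,q,r}"
      using Hp_edge_triple[OF \<open>e \<in> Hp_edges\<close>] by blast
    have "S \<inter> V p \<noteq> {}" "S \<inter> V q \<noteq> {}" "S \<inter> V r \<noteq> {}"
      using \<open>e \<subseteq> ?T\<close> unfolding e by simp_all
    then obtain x y z where "x \<in> S" "y \<in> S" "z \<in> S" and xyz: "x \<in> V p" "y \<in> V q" "z \<in> V r"
      by blast
    then have "{x,y,z} \<subseteq> S"
      by simp
    moreover have "{x,y,z} \<in> blowup_edges V"
      using xyz \<open>e \<in> Hp_edges\<close> unfolding blowup_edges_def e by blast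
    ultimately show False
      using assms unfolding coclique_def by blast
  qed
  then show "Hp_independent ?T"
    unfolding Hp_independent_def by blast
qed

lemma coclique_card_le:
  assumes "coclique V S"
  obtains T where "Hp_independent T" "card S \<le> (\<Sum>i\<in>T. card (V i))"
proof -
  obtain T where T: "Hp_independent T" "S \<subseteq> (\<Union>i\<in>T. V i)"
    using coclique_subset_UN_parts[OF assms] .
  then have "T \<subseteq> {1..6}"
    by (simp add: Hp_independent_def)
  then have "card S \<le> card (\<Union>i\<in>T. V i)"
    using T fin finite_subset[OF \<open>T \<subseteq> {1..6}\<close>] by (intro card_mono finite_UN_I) auto
  also have "\<dots> = (\<Sum>i\<in>T. card (V i))"
    using card_UN_parts \<open>T \<subseteq> {1..6}\<close> .
  finally show ?thesis
    using that T by blast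
qed

lemma exists_coclique_ge:
  assumes "Hp_independent T" "x \<le> (\<Sum>i\<in>T. real (card (V i)))"
  shows "\<exists>S. coclique V S \<and> x \<le> real (card S)"
proof -
  have "T \<subseteq> {1..6}"
    using assms(1) by (simp add: Hp_independent_def)
  then have "real (card (\<Union>i\<in>T. V i)) = (\<Sum>i\<in>T. real (card (V i)))"
    by (simp add: card_UN_parts)
  then show ?thesis
    using coclique_UN_parts[OF assms(1)] assms(2) by metis
qed

lemma exists_coclique_half:
  "\<exists>S. coclique V S \<and> real (card (blowup_vertices V)) / 2 \<le> real (card S)"
proof -
  obtain T where "Hp_independent T"
      "(\<Sum>i\<in>{1..6}. real (card (V i))) / 2 \<le> (\<Sum>i\<in>T. real (card (V i)))"
    using Hp_independent_heavy_triple by blast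
  then show ?thesis
    unfolding card_blowup_vertices of_nat_sum by (rule exists_coclique_ge)
qed

lemma card_blowup_vertices_equal_parts:
  assumes "\<forall>i\<in>{1..6}. card (V i) = card (V 1)"
  shows "card (blowup_vertices V) = 6 * card (V 1)"
  using assms unfolding card_blowup_vertices sum_1_6 atLeastAtMost_1_6 by simp

lemma exists_coclique_more_than_half:
  assumes "card (blowup_vertices V) mod 6 \<noteq> 0"
  shows "\<exists>S. coclique V S \<and> real (card (blowup_vertices V)) / 2 < real (card S)"
proof -
  obtain i where i: "i \<in> {1..6}" "card (V i) \<noteq> card (V 1)"
  proof (rule ccontr)
    assume "\<not> thesis"
    then have "card (blowup_vertices V) = 6 * card (V 1)"
      using that by (intro card_blowup_vertices_equal_parts) blast
    with assms show False
      by simp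
  qed
  obtain T where T: "Hp_independent T"
      "(\<Sum>i\<in>{1..6}. real (card (V i))) / 2 < (\<Sum>i\<in>T. real (card (V i)))"
    using Hp_independent_heavier_triple[OF i(1), of "\<lambda>i. real (card (V i))"] i(2) by auto
  obtain S where "coclique V S" "(\<Sum>i\<in>T. real (card (V i))) \<le> real (card S)"
    using exists_coclique_ge[OF T(1) order_refl] by blast
  moreover have "real (card (blowup_vertices V)) = (\<Sum>i\<in>{1..6}. real (card (V i)))"
    by (simp add: card_blowup_vertices)
  ultimately show ?thesis
    using T(2) by auto
qed

lemma coclique_card_le_half:
  assumes equal: "\<forall>i\<in>{1..6}. real (card (V i)) = real (card (blowup_vertices V)) / 6"
    and "coclique V S"
  shows "real (card S) \<le> real (card (blowup_vertices V)) / 2"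
proof -
  let ?m = "real (card (blowup_vertices V)) / 6"
  obtain T where T: "Hp_independent T" "card S \<le> (\<Sum>i\<in>T. card (V i))"
    using coclique_card_le[OF \<open>coclique V S\<close>] .
  then have "real (card S) \<le> (\<Sum>i\<in>T. real (card (V i)))"
    by (metis of_nat_le_iff of_nat_sum)
  also have "\<dots> = (\<Sum>i\<in>T. ?m)"
    using T(1) equal by (intro sum.cong) (auto simp: Hp_independent_def)
  also have "\<dots> = real (card T) * ?m"
    by simp
  also have "\<dots> \<le> 3 * ?m"
    using Hp_independent_card_le_3[OF T(1)] by (intro mult_right_mono) auto
  finally show ?thesis
    by simp
qed

end

theorem mainTheorem13:
  fixes V :: "nat \<Rightarrow> 'a set" and n :: nat
  assumes fin: "\<And>i. i \<in> {1..6} \<Longrightarrow> finite (V i)"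
    and disj: "\<And>i j. i \<in> {1..6} \<Longrightarrow> j \<in> {1..6} \<Longrightarrow> i \<noteq> j \<Longrightarrow> V i \<inter> V j = {}"
    and n_def: "n = card (blowup_vertices V)"
  shows "(\<exists>S. coclique V S \<and> real (card S) \<ge> real n / 2)
    \<and> (n mod 6 \<noteq> 0 \<longrightarrow> (\<exists>S. coclique V S \<and> real (card S) > real n / 2))
    \<and> ((\<forall>i\<in>{1..6}. real (card (V i)) = real n / 6) \<longrightarrow>
          (\<exists>S. coclique V S \<and> real (card S) = real n / 2)
          \<and> (\<forall>S. coclique V S \<longrightarrow> real (card S) \<le> real n / 2))"
proof -
  interpret Hp_blowup V
    using fin disj by unfold_locales
  have half: "\<exists>S. coclique V S \<and> real (card S) \<ge> real n / 2"
    using exists_coclique_half unfolding n_def by blast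
  moreover have "n mod 6 \<noteq> 0 \<Longrightarrow> \<exists>S. coclique V S \<and> real (card S) > real n / 2"
    using exists_coclique_more_than_half unfolding n_def by blast
  moreover have at_most_half: "real (card S) \<le> real n / 2"
    if "\<forall>i\<in>{1..6}. real (card (V i)) = real n / 6" "coclique V S" for S
    using coclique_card_le_half that unfolding n_def by blast
  moreover have "\<exists>S. coclique V S \<and> real (card S) = real n / 2"
    if "\<forall>i\<in>{1..6}. real (card (V i)) = real n / 6"
    using half at_most_half[OF that] order_antisym by blast
  ultimately show ?thesis
    using at_most_half by blast
qed

end
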